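(* Let $d\ge2$, $n\in\mathbb N$, and let $T\subset[0,1)^d$ be a finite set such that $2\pi T:=\{2\pi\mathbf x:\mathbf x\in T\}$ provides universal discretization in $L_\infty$ for the collection $\mathcal C(n,d)$ with constant $C_1(d)>0$, i.e. $C_1(d)\|f\|_\infty\le\max_{\xi\in2\pi T}|f(\xi)|$ for every $f\in\mathcal T(R(\mathbf s))$ and every $\mathbf s\in\mathbb Z_+^d$ with $\|\mathbf s\|_1=n$. Then there exists a constant $C(d)>0$, depending only on $d$ and $C_1(d)$ (not on $n$ or $T$), such that $\mathrm{disp}(T)\le C(d)2^{-n}$.
   Context: $\mathbb T^d:=[0,2\pi)^d$; $\|f\|_\infty:=\sup_{\mathbf x}|f(\mathbf x)|$. For $\mathbf x<\mathbf y$ in $[0,1)^d$ (coordinatewise), $[\mathbf x,\mathbf y):=[x_1,y_1)\times\cdots\times[x_d,y_d)$, and $\mathcal B$ is the set of all such boxes. The dispersion of a finite $T\subset[0,1)^d$ is $\mathrm{disp}(T):=\sup\{\mathrm{vol}(B):B\in\mathcal B,\ B\cap T=\emptyset\}$. For finite $Q\subset\mathbb Z^d$, $\mathcal T(Q)$ is the space of trigonometric polynomials $\sum_{\mathbf k\in Q}c_{\mathbf k}e^{i(\mathbf k,\mathbf x)}$. For $\mathbf s\in\mathbb Z_+^d$, $R(\mathbf s):=\{\mathbf k\in\mathbb Z^d:|k_j|<2^{s_j}\ \forall j\}$ and $\mathcal C(n,d):=\{\mathcal T(R(\mathbf s)):\|\mathbf s\|_1=n\}$. *)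

theory Defs
  imports "HOL-Analysis.Analysis"
begin

text \<open>Points of [0,1)^d and of the torus are functions on a finite index type 'd
  (so d = CARD('d)). Frequencies are functions 'd \<Rightarrow> int.\<close>

definition unit_cube :: "('d::finite \<Rightarrow> real) set" where
  "unit_cube = {x. \<forall>j. 0 \<le> x j \<and> x j < 1}"

definition torus :: "('d::finite \<Rightarrow> real) set" where
  "torus = {x. \<forall>j. 0 \<le> x j \<and> x j < 2 * pi}"

definition hyperbolic_rect :: "('d::finite \<Rightarrow> nat) \<Rightarrow> ('d \<Rightarrow> int) set" where
  "hyperbolic_rect s = {k. \<forall>j. \<bar>k j\<bar> < 2 ^ (s j)}"

definition trig_poly :: "('d::finite \<Rightarrow> int) set \<Rightarrow> (('d \<Rightarrow> int) \<Rightarrow> complex) \<Rightarrow> ('d \<Rightarrow> real) \<Rightarrow> complex" where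
  "trig_poly Q c x = (\<Sum>k\<in>Q. c k * cis (\<Sum>j\<in>UNIV. real_of_int (k j) * x j))"

definition sup_norm :: "(('d::finite \<Rightarrow> real) \<Rightarrow> complex) \<Rightarrow> real" where
  "sup_norm f = (SUP x\<in>torus. cmod (f x))"

text \<open>Universal discretization in L_infinity of C(n,d) by the point set 2\<pi>T with constant C1:
  C1 ||f||_\<infinity> \<le> max_{\<xi>\<in>2\<pi>T} |f(\<xi>)| for all f in T(R(s)), ||s||_1 = n.
  (The maximum over a finite set is written via an existential witness.)\<close>
definition univ_disc :: "real \<Rightarrow> nat \<Rightarrow> ('d::finite \<Rightarrow> real) set \<Rightarrow> bool" where
  "univ_disc C1 n T \<longleftrightarrow>
     (\<forall>s::'d \<Rightarrow> nat. (\<Sum>j\<in>UNIV. s j) = n \<longrightarrow>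
        (\<forall>c. \<exists>\<xi>\<in>T. C1 * sup_norm (trig_poly (hyperbolic_rect s) c)
                     \<le> cmod (trig_poly (hyperbolic_rect s) c (\<lambda>j. 2 * pi * \<xi> j))))"

definition box_co :: "('d::finite \<Rightarrow> real) \<Rightarrow> ('d \<Rightarrow> real) \<Rightarrow> ('d \<Rightarrow> real) set" where
  "box_co x y = {z. \<forall>j. x j \<le> z j \<and> z j < y j}"

definition disp :: "('d::finite \<Rightarrow> real) set \<Rightarrow> real" where
  "disp T = Sup {(\<Prod>j\<in>UNIV. y j - x j) | x y.
      x \<in> unit_cube \<and> y \<in> unit_cube \<and> (\<forall>j. x j < y j) \<and> box_co x y \<inter> T = {}}"

end

theory Submission
  imports Defs
begin

text \<open>
  Suppose an empty box \<open>[x, y)\<close> had volume much larger than \<open>2^-n\<close>. Then one can choose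
  dyadic levels \<open>s\<close> with \<open>\<parallel>s\<parallel>\<^sub>1 = n\<close> and \<open>2^s\<^sub>j (y\<^sub>j - x\<^sub>j) \<ge> K\<close> for every \<open>j\<close>.
  The product of squared Dirichlet kernels \<open>\<Prod>\<^sub>j |\<Sum>\<^sub>a\<^sub><\<^sub>2\<^sup>s\<^sup>j e^{ia(t\<^sub>j - \<theta>\<^sub>j)}|^2\<close>,
  centred at \<open>\<theta> = \<pi>(x + y)\<close>, lies in \<open>T(R(s))\<close> and peaks at \<open>\<theta>\<close> with value \<open>4^n\<close>.
  Every point of \<open>T\<close> leaves the box in some coordinate \<open>j\<close>, where \<open>|e^{it} - 1| \<ge> y\<^sub>j - x\<^sub>j\<close>,
  so the \<open>j\<close>-th factor is at most \<open>4 \<cdot> 4^s\<^sub>j / K^2\<close> and the polynomial is at most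
  \<open>4 \<cdot> 4^n / K^2\<close> on \<open>2\<pi>T\<close>. For \<open>K^2 > 4 / C\<^sub>1\<close> this contradicts the discretization
  inequality, so every empty box has volume at most \<open>(2K)^d 2^-n\<close>.
\<close>

lemma norm_cis_minus_1: "cmod (cis t - 1) = 2 * \<bar>sin (t / 2)\<bar>"
proof -
  have "(cmod (cis t - 1))\<^sup>2 = (cos t - 1)\<^sup>2 + (sin t)\<^sup>2"
    by (simp add: cmod_def)
  also have "\<dots> = 2 - 2 * cos t"
    using sin_cos_squared_add[of t] by (simp add: power2_eq_square algebra_simps)
  also have "\<dots> = (2 * \<bar>sin (t / 2)\<bar>)\<^sup>2"
    using cos_double_sin[of "t / 2"] by (simp add: power2_eq_square)
  finally show ?thesis
    using power2_eq_iff_nonneg[of "cmod (cis t - 1)" "2 * \<bar>sin (t / 2)\<bar>"] by simp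
qed

lemma sin_ge_third:
  fixes x :: real
  assumes x: "0 \<le> x" "x \<le> 2"
  shows "x / 3 \<le> sin x"
proof -
  have "\<bar>sin x - (\<Sum>m<3. sin_coeff m * x ^ m)\<bar> \<le> inverse (fact 3) * \<bar>x\<bar> ^ 3"
    by (rule Maclaurin_sin_bound)
  moreover have "(\<Sum>m<3. sin_coeff m * x ^ m) = x"
    by (simp add: sin_coeff_def numeral_3_eq_3)
  ultimately have "\<bar>sin x - x\<bar> \<le> x ^ 3 / 6"
    using x by (simp add: fact_numeral)
  then have "x - x ^ 3 / 6 \<le> sin x"
    using abs_ge_minus_self[of "sin x - x"] by linarith
  moreover have "x * x\<^sup>2 \<le> x * 4"
    using x mult_mono[of x 2 x 2] by (intro mult_left_mono) (auto simp: power2_eq_square)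
  ultimately show ?thesis
    by (simp add: power3_eq_cube power2_eq_square)
qed

lemma sin_pi_ge_min:
  assumes "0 \<le> u" "u \<le> 1"
  shows "min u (1 - u) \<le> sin (pi * u)"
proof -
  define v where "v = min u (1 - u)"
  have v: "0 \<le> v" "v \<le> 1 / 2" using assms by (auto simp: v_def min_def)
  have "sin (pi * u) = sin (pi * v)"
    by (cases "u \<le> 1 - u") (simp_all add: v_def right_diff_distrib)
  moreover have "v \<le> pi * v / 3" using v pi_gt3 mult_right_mono[of 3 pi v] by simp
  moreover have "pi * v \<le> 2"
    using v pi_less_4 mult_mono[of pi 4 v "1 / 2"] by simp
  then have "pi * v / 3 \<le> sin (pi * v)" using v by (intro sin_ge_third) simp_all
  ultimately show ?thesis unfolding v_def by linarith
qed

lemma norm_cis_minus_1_outside_interval: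
  fixes p x y :: real
  assumes "0 \<le> p" "p < 1" "0 \<le> x" "x < y" "y < 1" "\<not> (x \<le> p \<and> p < y)"
  shows "y - x \<le> cmod (cis (2 * pi * (p - (x + y) / 2)) - 1)"
proof -
  define w where "w = p - (x + y) / 2"
  define u where "u = \<bar>w\<bar>"
  have u: "(y - x) / 2 \<le> min u (1 - u)" "u \<le> 1"
    using assms by (cases "p < x"; simp add: u_def w_def abs_if field_simps; linarith)+
  have "sin (pi * u) = sin (pi * w) \<or> sin (pi * u) = - sin (pi * w)"
    by (auto simp: u_def abs_if)
  moreover have "0 \<le> sin (pi * u)"
    using u(2) by (intro sin_ge_zero) (auto simp: u_def)
  ultimately have "\<bar>sin (pi * w)\<bar> = sin (pi * u)" by auto
  then have "cmod (cis (2 * pi * w) - 1) = 2 * sin (pi * u)"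
    by (simp add: norm_cis_minus_1)
  moreover have "min u (1 - u) \<le> sin (pi * u)"
    using u(2) by (intro sin_pi_ge_min) (simp_all add: u_def)
  ultimately show ?thesis using u(1) by (simp add: w_def min_def split: if_splits)
qed

lemma cis_sum: "finite I \<Longrightarrow> cis (\<Sum>i\<in>I. f i) = (\<Prod>i\<in>I. cis (f i))"
  by (simp add: cis_conv_exp sum_distrib_left exp_sum)

lemma pow2_squared: "((2::real) ^ k)\<^sup>2 = 4 ^ k"
  by (simp add: power2_eq_square flip: power_mult_distrib)

definition dirichlet_sum :: "nat \<Rightarrow> real \<Rightarrow> complex" where
  "dirichlet_sum N t = (\<Sum>a<N. cis t ^ a)"

lemma dirichlet_sum_0 [simp]: "dirichlet_sum N 0 = of_nat N"
  by (simp add: dirichlet_sum_def)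

lemma norm_dirichlet_sum_le: "cmod (dirichlet_sum N t) \<le> N"
proof -
  have "cmod (dirichlet_sum N t) \<le> (\<Sum>a<N. cmod (cis t ^ a))"
    unfolding dirichlet_sum_def by (rule norm_sum)
  also have "\<dots> = N" by (simp add: norm_power)
  finally show ?thesis .
qed

lemma norm_dirichlet_sum_pow2_squared_le: "(cmod (dirichlet_sum (2 ^ k) t))\<^sup>2 \<le> 4 ^ k"
  using power_mono[OF norm_dirichlet_sum_le[of "2 ^ k" t], of 2] by (simp add: pow2_squared)

lemma norm_dirichlet_sum_mult_le: "cmod (dirichlet_sum N t) * cmod (cis t - 1) \<le> 2"
proof -
  have "cis t ^ N - 1 = (cis t - 1) * dirichlet_sum N t"
    unfolding dirichlet_sum_def by (rule power_diff_1_eq)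
  then have "cmod (dirichlet_sum N t) * cmod (cis t - 1) = cmod (cis t ^ N - 1)"
    by (simp add: norm_mult)
  also have "\<dots> \<le> cmod (cis t ^ N) + cmod (1::complex)" by (rule norm_triangle_ineq4)
  also have "\<dots> = 2" by (simp add: norm_power)
  finally show ?thesis .
qed

lemma norm_dirichlet_sum_squared:
  "complex_of_real ((cmod (dirichlet_sum N t))\<^sup>2) =
     (\<Sum>p\<in>{..<N} \<times> {..<N}. cis (of_int (int (fst p) - int (snd p)) * t))"
proof -
  have "complex_of_real ((cmod (dirichlet_sum N t))\<^sup>2) = dirichlet_sum N t * cnj (dirichlet_sum N t)"
    by (rule complex_norm_square)
  also have "\<dots> = (\<Sum>a<N. \<Sum>b<N. cis t ^ a * cnj (cis t ^ b))"
    unfolding dirichlet_sum_def by (simp add: sum_product)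
  also have "\<dots> = (\<Sum>a<N. \<Sum>b<N. cis (of_int (int a - int b) * t))"
  proof (intro sum.cong refl)
    fix a b :: nat
    have "cis t ^ a * cnj (cis t ^ b) = cis (real a * t + - (real b * t))"
      by (simp only: complex_cnj_power cis_cnj Complex.DeMoivre cis_mult mult_minus_right)
    then show "cis t ^ a * cnj (cis t ^ b) = cis (of_int (int a - int b) * t)"
      by (simp add: algebra_simps)
  qed
  also have "\<dots> = (\<Sum>p\<in>{..<N} \<times> {..<N}. cis (of_int (int (fst p) - int (snd p)) * t))"
    by (simp add: sum.cartesian_product case_prod_beta)
  finally show ?thesis .
qed

lemma finite_hyperbolic_rect: "finite (hyperbolic_rect (s :: 'd::finite \<Rightarrow> nat))"
proof (rule finite_subset)
  show "hyperbolic_rect s \<subseteq> PiE UNIV (\<lambda>j. {- (2 ^ s j) .. 2 ^ s j})"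
  proof
    fix k assume "k \<in> hyperbolic_rect s"
    then have "\<bar>k j\<bar> \<le> 2 ^ s j" for j by (simp add: hyperbolic_rect_def less_imp_le)
    then show "k \<in> PiE UNIV (\<lambda>j. {- (2 ^ s j) .. 2 ^ s j})"
      by (auto simp: abs_le_iff PiE_iff minus_le_iff)
  qed
  show "finite (PiE (UNIV :: 'd set) (\<lambda>j. {- (2 ^ s j) .. (2::int) ^ s j}))"
    by (intro finite_PiE) auto
qed

lemma sum_cis_is_trig_poly:
  fixes h :: "'i \<Rightarrow> 'd::finite \<Rightarrow> int"
  assumes "finite P" "finite Q" "h ` P \<subseteq> Q"
  shows "\<exists>c. \<forall>x. trig_poly Q c x = (\<Sum>q\<in>P. w q * cis (\<Sum>j\<in>UNIV. of_int (h q j) * x j))"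
proof (intro exI allI)
  fix x :: "'d \<Rightarrow> real"
  let ?c = "\<lambda>k. \<Sum>q\<in>{q\<in>P. h q = k}. w q"
  have "trig_poly Q ?c x = (\<Sum>k\<in>Q. \<Sum>q\<in>{q\<in>P. h q = k}. w q * cis (\<Sum>j\<in>UNIV. of_int (k j) * x j))"
    unfolding trig_poly_def by (simp add: sum_distrib_right)
  also have "\<dots> = (\<Sum>k\<in>Q. \<Sum>q\<in>{q\<in>P. h q = k}. w q * cis (\<Sum>j\<in>UNIV. of_int (h q j) * x j))"
    by (intro sum.cong refl) simp
  also have "\<dots> = (\<Sum>q\<in>P. w q * cis (\<Sum>j\<in>UNIV. of_int (h q j) * x j))"
    by (rule sum.group[OF assms])
  finally show "trig_poly Q ?c x = (\<Sum>q\<in>P. w q * cis (\<Sum>j\<in>UNIV. of_int (h q j) * x j))" .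
qed

lemma norm_le_sup_norm:
  assumes "bdd_above ((\<lambda>x. cmod (f x)) ` torus)" "x \<in> torus"
  shows "cmod (f x) \<le> sup_norm f"
  using assms unfolding sup_norm_def by (intro cSup_upper) auto

text \<open>\<open>|dirichlet_sum N t|^2\<close> is \<open>N\<close> times the Fejer kernel of order \<open>N\<close>.\<close>

definition fejer_prod :: "('d::finite \<Rightarrow> nat) \<Rightarrow> ('d \<Rightarrow> real) \<Rightarrow> ('d \<Rightarrow> real) \<Rightarrow> real" where
  "fejer_prod s \<theta> x = (\<Prod>j\<in>UNIV. (cmod (dirichlet_sum (2 ^ s j) (x j - \<theta> j)))\<^sup>2)"

lemma fejer_prod_is_trig_poly:
  fixes s :: "'d::finite \<Rightarrow> nat"
  shows "\<exists>c. \<forall>x. trig_poly (hyperbolic_rect s) c x = complex_of_real (fejer_prod s \<theta> x)"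
proof -
  define A where "A j = {..<(2::nat) ^ s j} \<times> {..<(2::nat) ^ s j}" for j
  define h where "h q j = int (fst (q j)) - int (snd (q j))" for q :: "'d \<Rightarrow> nat \<times> nat" and j
  have h_rect: "h ` PiE UNIV A \<subseteq> hyperbolic_rect s"
  proof
    fix k assume "k \<in> h ` PiE UNIV A"
    then obtain q where q: "\<And>j. q j \<in> A j" "k = h q" by (auto simp: PiE_iff)
    show "k \<in> hyperbolic_rect s"
      unfolding hyperbolic_rect_def
    proof (intro CollectI allI)
      fix j
      have "fst (q j) < 2 ^ s j" "snd (q j) < 2 ^ s j" using q(1)[of j] by (auto simp: A_def)
      then have "\<bar>int (fst (q j)) - int (snd (q j))\<bar> < int (2 ^ s j)" by linarith
      then show "\<bar>k j\<bar> < 2 ^ s j" by (simp add: q(2) h_def)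
    qed
  qed
  have "complex_of_real (fejer_prod s \<theta> x) =
      (\<Prod>j\<in>UNIV. \<Sum>p\<in>A j. cis (of_int (int (fst p) - int (snd p)) * (x j - \<theta> j)))" for x
    unfolding fejer_prod_def of_real_prod A_def norm_dirichlet_sum_squared ..
  also have "\<dots> x = (\<Sum>q\<in>PiE UNIV A. \<Prod>j\<in>UNIV. cis (of_int (h q j) * (x j - \<theta> j)))" for x
    unfolding h_def by (rule prod_sum_PiE) (auto simp: A_def)
  also have "\<dots> x = (\<Sum>q\<in>PiE UNIV A. cis (- (\<Sum>j\<in>UNIV. of_int (h q j) * \<theta> j))
                                      * cis (\<Sum>j\<in>UNIV. of_int (h q j) * x j))" for x
    by (simp add: cis_sum[symmetric] cis_mult right_diff_distrib sum_subtractf)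
  finally show ?thesis
    using sum_cis_is_trig_poly[OF _ finite_hyperbolic_rect h_rect,
        of "\<lambda>q. cis (- (\<Sum>j\<in>UNIV. of_int (h q j) * \<theta> j))"]
    by (simp add: A_def finite_PiE)
qed

lemma fejer_prod_nonneg: "0 \<le> fejer_prod s \<theta> x"
  by (simp add: fejer_prod_def prod_nonneg)

lemma fejer_prod_le: "fejer_prod s \<theta> x \<le> 4 ^ (\<Sum>j\<in>UNIV. s j)"
  unfolding fejer_prod_def power_sum
  by (intro prod_mono conjI norm_dirichlet_sum_pow2_squared_le zero_le_power2)

lemma fejer_prod_center: "fejer_prod s \<theta> \<theta> = 4 ^ (\<Sum>j\<in>UNIV. s j)"
  by (simp add: fejer_prod_def power_sum pow2_squared norm_power)

lemma fejer_prod_off_center: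
  assumes "0 \<le> K" "K \<le> 2 ^ s j * cmod (cis (x j - \<theta> j) - 1)"
  shows "K\<^sup>2 * fejer_prod s \<theta> x \<le> 4 * 4 ^ (\<Sum>i\<in>UNIV. s i)"
proof -
  define D where "D i = cmod (dirichlet_sum (2 ^ s i) (x i - \<theta> i))" for i
  have "D j * K \<le> D j * (2 ^ s j * cmod (cis (x j - \<theta> j) - 1))"
    using assms(2) by (intro mult_left_mono) (simp_all add: D_def)
  also have "\<dots> \<le> 2 ^ s j * 2"
    using norm_dirichlet_sum_mult_le[of "2 ^ s j" "x j - \<theta> j"] by (simp add: D_def)
  finally have "(D j * K)\<^sup>2 \<le> (2 ^ s j * 2)\<^sup>2"
    using assms(1) by (intro power_mono) (simp_all add: D_def)
  then have Dj: "K\<^sup>2 * (D j)\<^sup>2 \<le> 4 * 4 ^ s j"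
    by (simp add: power_mult_distrib pow2_squared mult_ac)
  have "K\<^sup>2 * fejer_prod s \<theta> x = K\<^sup>2 * (D j)\<^sup>2 * (\<Prod>i\<in>UNIV - {j}. (D i)\<^sup>2)"
    unfolding fejer_prod_def D_def by (subst prod.remove[of UNIV j]) auto
  also have "\<dots> \<le> 4 * 4 ^ s j * (\<Prod>i\<in>UNIV - {j}. 4 ^ s i)"
    using norm_dirichlet_sum_pow2_squared_le
    by (intro mult_mono[OF Dj] prod_mono prod_nonneg) (auto simp: D_def)
  also have "\<dots> = 4 * 4 ^ (\<Sum>i\<in>UNIV. s i)"
    by (simp add: power_sum prod.remove[of UNIV j])
  finally show ?thesis .
qed

lemma univ_disc_fejer_prod_peak:
  assumes "univ_disc C1 n T" "(\<Sum>j\<in>UNIV. s j) = n" "\<theta> \<in> torus" "0 \<le> C1"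
  shows "\<exists>\<xi>\<in>T. C1 * 4 ^ n \<le> fejer_prod s \<theta> (\<lambda>j. 2 * pi * \<xi> j)"
proof -
  obtain c where c: "\<And>z. trig_poly (hyperbolic_rect s) c z = complex_of_real (fejer_prod s \<theta> z)"
    using fejer_prod_is_trig_poly by blast
  define f where "f = trig_poly (hyperbolic_rect s) c"
  have norm_f: "cmod (f z) = fejer_prod s \<theta> z" for z
    by (simp add: f_def c fejer_prod_nonneg)
  have "bdd_above ((\<lambda>z. cmod (f z)) ` torus)"
    using fejer_prod_le[of s \<theta>] by (intro bdd_aboveI2) (simp add: norm_f)
  then have "4 ^ n \<le> sup_norm f"
    using norm_le_sup_norm[of f \<theta>] assms(2,3) by (simp add: norm_f fejer_prod_center)
  moreover obtain \<xi> where "\<xi> \<in> T" "C1 * sup_norm f \<le> cmod (f (\<lambda>j. 2 * pi * \<xi> j))"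
    using assms(1,2) unfolding univ_disc_def f_def by blast
  ultimately show ?thesis
    using assms(4) by (metis norm_f mult_left_mono order_trans)
qed

lemma exists_pow2_between:
  fixes b :: real
  assumes "1 \<le> b"
  shows "\<exists>r::nat. b \<le> 2 ^ r \<and> 2 ^ r \<le> 2 * b"
proof (intro exI conjI)
  define l where "l = log 2 b"
  have "0 \<le> l" "b = 2 powr l" using assms by (simp_all add: l_def)
  then have pow: "2 ^ nat \<lceil>l\<rceil> = (2::real) powr \<lceil>l\<rceil>"
    by (simp add: powr_realpow[symmetric])
  show "b \<le> 2 ^ nat \<lceil>l\<rceil>"
    unfolding pow using \<open>b = 2 powr l\<close> by (simp add: powr_mono)
  have "2 powr \<lceil>l\<rceil> \<le> 2 powr (l + 1)" by (intro powr_mono) linarith+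
  then show "2 ^ nat \<lceil>l\<rceil> \<le> 2 * b"
    unfolding pow using \<open>b = 2 powr l\<close> by (simp add: powr_add)
qed

lemma exists_levels_resolving_box:
  fixes a :: "'d::finite \<Rightarrow> real"
  assumes a: "\<And>j. 0 < a j" "\<And>j. a j \<le> 1" and K: "1 \<le> K"
    and vol: "(2 * K) ^ CARD('d) < 2 ^ n * (\<Prod>j\<in>UNIV. a j)"
  shows "\<exists>s. (\<Sum>j\<in>UNIV. s j) = n \<and> (\<forall>j. K \<le> 2 ^ s j * a j)"
proof -
  have "\<exists>r::nat. K / a j \<le> 2 ^ r \<and> 2 ^ r \<le> 2 * (K / a j)" for j
    using a[of j] K by (intro exists_pow2_between) (simp add: field_simps)
  then obtain r where rj: "\<And>j. K / a j \<le> 2 ^ r j \<and> 2 ^ r j \<le> 2 * (K / a j)"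
    by metis
  have r: "K \<le> 2 ^ r j * a j" "2 ^ r j * a j \<le> 2 * K" for j
    using rj[of j] a(1)[of j] by (simp_all add: field_simps)
  have "(2::real) ^ (\<Sum>j\<in>UNIV. r j) * (\<Prod>j\<in>UNIV. a j) = (\<Prod>j\<in>UNIV. 2 ^ r j * a j)"
    by (simp add: power_sum prod.distrib)
  also have "\<dots> \<le> (2 * K) ^ CARD('d)"
    using r(2) a(1) K by (intro prod_le_power) (auto simp: less_imp_le)
  also have "\<dots> < 2 ^ n * (\<Prod>j\<in>UNIV. a j)" by (rule vol)
  finally have "(\<Sum>j\<in>UNIV. r j) < n"
    using a(1) by (simp add: prod_pos)
  define j0 :: 'd where "j0 = undefined"
  define s where "s j = r j + (if j = j0 then n - (\<Sum>j\<in>UNIV. r j) else 0)" for j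
  have "(\<Sum>j\<in>UNIV. s j) = n"
    using \<open>(\<Sum>j\<in>UNIV. r j) < n\<close> by (simp add: s_def sum.distrib)
  moreover have "K \<le> 2 ^ s j * a j" for j
  proof -
    have "(2::real) ^ r j * a j \<le> 2 ^ s j * a j"
      using a(1)[of j] by (intro mult_right_mono power_increasing) (simp_all add: s_def)
    with r(1)[of j] show ?thesis by linarith
  qed
  ultimately show ?thesis by blast
qed

lemma empty_box_volume_le:
  fixes x y :: "'d::finite \<Rightarrow> real"
  assumes K: "1 \<le> K" "4 < C1 * K\<^sup>2"
    and T: "T \<subseteq> unit_cube" "univ_disc C1 n T"
    and xy: "x \<in> unit_cube" "y \<in> unit_cube" "\<forall>j. x j < y j" "box_co x y \<inter> T = {}"
  shows "(\<Prod>j\<in>UNIV. y j - x j) \<le> (2 * K) ^ CARD('d) * 2 powr - real n"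
proof (rule ccontr)
  assume "\<not> ?thesis"
  then have vol: "(2 * K) ^ CARD('d) < 2 ^ n * (\<Prod>j\<in>UNIV. y j - x j)"
    by (simp add: powr_minus powr_realpow field_simps)
  have xy01: "0 \<le> x j" "x j < y j" "y j < 1" for j
    using xy(1-3) by (auto simp: unit_cube_def)
  then have "0 < y j - x j" "y j - x j \<le> 1" for j
    using xy01[of j] by linarith+
  then obtain s where s: "(\<Sum>j\<in>UNIV. s j) = n" "\<And>j. K \<le> 2 ^ s j * (y j - x j)"
    using exists_levels_resolving_box[OF _ _ K(1) vol] by blast
  define \<theta> where "\<theta> j = 2 * pi * ((x j + y j) / 2)" for j
  have "0 \<le> (x j + y j) / 2 \<and> (x j + y j) / 2 < 1" for j
    using xy01[of j] by simp
  then have "\<theta> \<in> torus" by (auto simp: torus_def \<theta>_def)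
  have "0 < C1"
    using K(2) by (smt (verit) mult_nonpos_nonneg zero_le_power2)
  then obtain \<xi> where \<xi>: "\<xi> \<in> T" "C1 * 4 ^ n \<le> fejer_prod s \<theta> (\<lambda>j. 2 * pi * \<xi> j)"
    using univ_disc_fejer_prod_peak[OF T(2) s(1) \<open>\<theta> \<in> torus\<close>] by auto
  obtain j where out: "\<not> (x j \<le> \<xi> j \<and> \<xi> j < y j)"
    using \<xi>(1) xy(4) unfolding box_co_def by blast
  have "0 \<le> \<xi> j" "\<xi> j < 1" using \<xi>(1) T(1) by (auto simp: unit_cube_def)
  then have "y j - x j \<le> cmod (cis (2 * pi * \<xi> j - \<theta> j) - 1)"
    using norm_cis_minus_1_outside_interval[of "\<xi> j" "x j" "y j"] xy01 out
    by (simp add: \<theta>_def right_diff_distrib)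
  then have "K \<le> 2 ^ s j * cmod (cis (2 * pi * \<xi> j - \<theta> j) - 1)"
    using s(2)[of j] by (meson mult_left_mono order_trans zero_le_numeral zero_le_power)
  from fejer_prod_off_center[where x = "\<lambda>i. 2 * pi * \<xi> i" and \<theta> = \<theta> and s = s and j = j, OF _ this]
  have "K\<^sup>2 * fejer_prod s \<theta> (\<lambda>j. 2 * pi * \<xi> j) \<le> 4 * 4 ^ n"
    using K(1) s(1) by simp
  moreover have "K\<^sup>2 * (C1 * 4 ^ n) \<le> K\<^sup>2 * fejer_prod s \<theta> (\<lambda>j. 2 * pi * \<xi> j)"
    using \<xi>(2) by (simp add: mult_left_mono)
  ultimately have "(C1 * K\<^sup>2) * 4 ^ n \<le> 4 * 4 ^ n"
    by (simp only: ac_simps)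
  then show False using K(2) by simp
qed

lemma exists_empty_box:
  fixes T :: "('d::finite \<Rightarrow> real) set"
  assumes "finite T"
  shows "\<exists>x y. x \<in> unit_cube \<and> y \<in> unit_cube \<and> (\<forall>j. x j < y j) \<and> box_co x y \<inter> T = {}"
proof -
  define V where "V = insert (1 / 2) {t j |t j. t \<in> T \<and> 0 < t j}"
  have "finite V"
  proof -
    have "{t j |t j. t \<in> T \<and> 0 < t j} \<subseteq> (\<lambda>(t, j). t j) ` (T \<times> UNIV)" by auto
    moreover have "finite ((\<lambda>(t, j). t j) ` (T \<times> (UNIV :: 'd set)))" using assms by simp
    ultimately show ?thesis by (simp add: V_def finite_subset)
  qed
  define b where "b = Min V"
  have b: "0 < b" "b \<le> 1 / 2"
    using \<open>finite V\<close> Min_le[OF \<open>finite V\<close>, of "1 / 2"] by (auto simp: b_def V_def)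
  have below_b: "b \<le> t j" if "t \<in> T" "0 < t j" for t j
  proof -
    have "t j \<in> V" using that by (auto simp: V_def)
    then show ?thesis unfolding b_def using \<open>finite V\<close> by (rule Min_le[rotated])
  qed
  show ?thesis
  proof (intro exI conjI)
    show "(\<lambda>_. b / 2) \<in> unit_cube" "(\<lambda>_. b) \<in> unit_cube" "\<forall>j::'d. b / 2 < b"
      using b by (auto simp: unit_cube_def)
    have "t \<notin> box_co (\<lambda>_. b / 2) (\<lambda>_. b)" if "t \<in> T" for t
      using below_b[OF that, of undefined] b(1) unfolding box_co_def
      by (auto intro!: exI[of _ undefined])
    then show "box_co (\<lambda>_. b / 2) (\<lambda>_. b) \<inter> T = {}" by blast
  qed
qed

lemma disp_le:
  fixes T :: "('d::finite \<Rightarrow> real) set"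
  assumes "finite T"
    and "\<And>x y. x \<in> unit_cube \<Longrightarrow> y \<in> unit_cube \<Longrightarrow> \<forall>j. x j < y j \<Longrightarrow> box_co x y \<inter> T = {}
           \<Longrightarrow> (\<Prod>j\<in>UNIV. y j - x j) \<le> B"
  shows "disp T \<le> B"
  \<comment> \<open>The empty box is needed because the supremum of the empty set of reals is unspecified.\<close>
  unfolding disp_def using exists_empty_box[OF assms(1)] assms(2) by (intro cSup_least) auto

theorem theorem2p2:
  assumes "CARD('d::finite) \<ge> 2" and "C1 > 0"
  shows "\<exists>C>0. \<forall>(n::nat) (T::('d \<Rightarrow> real) set).
           finite T \<and> T \<subseteq> unit_cube \<and> univ_disc C1 n T \<longrightarrow> disp T \<le> C * 2 powr (- real n)"
  \<comment> \<open>The argument works in every dimension.\<close>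
proof -
  define K where "K = 4 / C1 + 1"
  have K: "1 \<le> K" "4 < C1 * K\<^sup>2"
  proof -
    show "1 \<le> K" using assms(2) by (simp add: K_def)
    have "4 < C1 * K" using assms(2) by (simp add: K_def field_simps)
    also have "C1 * K \<le> C1 * K\<^sup>2"
      using \<open>1 \<le> K\<close> assms(2) by (simp add: power2_eq_square)
    finally show "4 < C1 * K\<^sup>2" .
  qed
  show ?thesis
  proof (intro exI[of _ "(2 * K) ^ CARD('d)"] conjI allI impI)
    show "0 < (2 * K) ^ CARD('d)" using K(1) by simp
    fix n :: nat and T :: "('d \<Rightarrow> real) set"
    assume "finite T \<and> T \<subseteq> unit_cube \<and> univ_disc C1 n T"
    then show "disp T \<le> (2 * K) ^ CARD('d) * 2 powr - real n"
      using empty_box_volume_le[OF K] by (intro disp_le) auto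
  qed
qed

end
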